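(* Let $\boldsymbol{\Xi} = \begin{bmatrix}\boldsymbol{\alpha}_1 & \boldsymbol{\alpha}_2 & \boldsymbol{\alpha}_3\\ \boldsymbol{\beta}_1 & \boldsymbol{\beta}_2 & \boldsymbol{\beta}_3\end{bmatrix}\in\mathbb{R}^{6\times 3}$ (with $\boldsymbol{\alpha}_j,\boldsymbol{\beta}_j\in\mathbb{R}^3$) satisfy $\Vert\boldsymbol{\alpha}_1\Vert\neq 0$ and $\boldsymbol{\alpha}_1\times\boldsymbol{\alpha}_2\neq\boldsymbol{0}$, and let $\boldsymbol{\Xi}=\boldsymbol{S}\boldsymbol{U}$ be its unique $SU$-decomposition, with $\boldsymbol{S}=\begin{bmatrix}\boldsymbol{R} & \boldsymbol{0}\\ [\boldsymbol{p}]_\times\boldsymbol{R} & \boldsymbol{R}\end{bmatrix}$ and $\boldsymbol{R}=[\boldsymbol{r}_1\ \boldsymbol{r}_2\ \boldsymbol{r}_3]$. Then: (1) $\boldsymbol{r}_1$ is parallel to the screw axis of $\boldsymbol{\xi}_1=(\boldsymbol{\alpha}_1;\boldsymbol{\beta}_1)$; (2) $\boldsymbol{r}_3$ is parallel to the common normal of the screw axes of $\boldsymbol{\xi}_1$ and $\boldsymbol{\xi}_2=(\boldsymbol{\alpha}_2;\boldsymbol{\beta}_2)$; (3) $\boldsymbol{p}$ lies on the screw axis of $\boldsymbol{\xi}_1$; (4) $\boldsymbol{p}$ is the intersection point of the screw axis of $\boldsymbol{\xi}_1$ with the common normal of the screw axes of $\boldsymbol{\xi}_1$ and $\boldsymb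ol{\xi}_2$.
   Context: For $\boldsymbol{a}\in\mathbb{R}^3$, $[\boldsymbol{a}]_\times$ denotes the skew-symmetric matrix with $[\boldsymbol{a}]_\times\boldsymbol{b}=\boldsymbol{a}\times\boldsymbol{b}$. A screw-transformation matrix is a $6\times6$ matrix $\begin{bmatrix}\boldsymbol{R} & \boldsymbol{0}\\ [\boldsymbol{p}]_\times\boldsymbol{R} & \boldsymbol{R}\end{bmatrix}$ with $\boldsymbol{R}\in SO(3)$, $\boldsymbol{p}\in\mathbb{R}^3$. An $SU$-decomposition of $\boldsymbol{\Xi}$ is a factorization $\boldsymbol{\Xi}=\boldsymbol{S}\boldsymbol{U}$ with $\boldsymbol{S}$ a screw-transformation matrix and $\boldsymbol{U}=\begin{bmatrix}\boldsymbol{U}_1\\ \boldsymbol{U}_2\end{bmatrix}$, where $\boldsymbol{U}_1,\boldsymbol{U}_2$ are $3\times3$ upper-triangular with $(\boldsymbol{U}_1)_{11}>0$, $(\boldsymbol{U}_1)_{22}>0$; it exists and is unique under the stated conditions. For a screw $\boldsymbol{\xi}=(\boldsymbol{\alpha};\boldsymbol{\beta})\in\mathbb{R}^6$ with $\boldsymbol{\alpha}\neq\boldsymbol{0}$, its screw axis is the line $\{\boldsymbol{p}_\perp + t\,\boldsymbol{e} : t\in\mathbb{R}\}$ in $\mathbb{R}^3$, where $\boldsymbol{e}=\boldsymbol{\alpha}/\Vert\boldsymbol{\alpha}\Vert$ and $\boldsymbol{p}_\perp = (\boldsymbol{\alpha}\times\boldsymbol{\beta})/\Vert\boldsymbol{\alpha}\Vert^2$.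 The common normal of two non-parallel lines is the unique line that intersects both lines perpendicularly. *)

theory Defs
  imports "HOL-Analysis.Analysis"
begin

text \<open>Skew-symmetric matrix: skew a *v b = a x b (its j-th column is a x e_j).\<close>
definition skew :: "real^3 \<Rightarrow> real^3^3" where
  "skew a = (\<chi> i j. (cross3 a (axis j 1)) $ i)"

type_synonym line3 = "(real^3, real^3) prod"

definition on_line :: "real^3 \<Rightarrow> line3 \<Rightarrow> bool" where
  "on_line x L \<longleftrightarrow> (\<exists>t::real. x = fst L + t *\<^sub>R snd L)"

definition screw_axis :: "real^3 \<Rightarrow> real^3 \<Rightarrow> line3" where
  "screw_axis \<alpha> \<beta> = ((1 / (norm \<alpha>)\<^sup>2) *\<^sub>R cross3 \<alpha> \<beta>, (1 / norm \<alpha>) *\<^sub>R \<alpha>)"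

definition is_common_normal :: "line3 \<Rightarrow> line3 \<Rightarrow> line3 \<Rightarrow> bool" where
  "is_common_normal L1 L2 N \<longleftrightarrow>
     snd N \<noteq> 0 \<and>
     (\<exists>x. on_line x L1 \<and> on_line x N) \<and>
     (\<exists>y. on_line y L2 \<and> on_line y N) \<and>
     snd N \<bullet> snd L1 = 0 \<and> snd N \<bullet> snd L2 = 0"

definition parallel :: "real^3 \<Rightarrow> real^3 \<Rightarrow> bool" where
  "parallel u v \<longleftrightarrow> u \<noteq> 0 \<and> v \<noteq> 0 \<and> (\<exists>c::real. u = c *\<^sub>R v)"

text \<open>SU-decomposition of Xi = [A; B] (A = [alpha_1 alpha_2 alpha_3], B = [beta_1 beta_2 beta_3]):
  Xi = S U with S = [R 0; [p]x R  R], R in SO(3), U = [U1; U2], U1, U2 upper triangular,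
  (U1)_11 > 0, (U1)_22 > 0.  The block product S U is written out blockwise.\<close>
definition upper_triangular3 :: "real^3^3 \<Rightarrow> bool" where
  "upper_triangular3 U \<longleftrightarrow> U $ 2 $ 1 = 0 \<and> U $ 3 $ 1 = 0 \<and> U $ 3 $ 2 = 0"

definition is_SU_decomposition ::
  "real^3^3 \<Rightarrow> real^3^3 \<Rightarrow> real^3^3 \<Rightarrow> real^3 \<Rightarrow> real^3^3 \<Rightarrow> real^3^3 \<Rightarrow> bool" where
  "is_SU_decomposition A B R p U1 U2 \<longleftrightarrow>
     rotation_matrix R \<and> upper_triangular3 U1 \<and> upper_triangular3 U2 \<and>
     U1 $ 1 $ 1 > 0 \<and> U1 $ 2 $ 2 > 0 \<and>
     A = R ** U1 \<and> B = (skew p ** R) ** U1 + R ** U2"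

end

theory Submission
  imports Defs
begin

text \<open>
  Write \<open>r\<^sub>i\<close> for the columns of \<open>R\<close>. Since \<open>U\<^sub>1, U\<^sub>2\<close> are upper triangular,
  \<open>\<alpha>\<^sub>1 \<parallel> r\<^sub>1\<close>, \<open>\<alpha>\<^sub>2 \<in> span {r\<^sub>1, r\<^sub>2}\<close> and \<open>\<beta>\<^sub>j = p \<times> \<alpha>\<^sub>j + w\<^sub>j\<close> with
  \<open>w\<^sub>1 \<parallel> r\<^sub>1\<close>, \<open>w\<^sub>2 \<in> span {r\<^sub>1, r\<^sub>2}\<close>. The screw axis of \<open>(\<alpha>; p \<times> \<alpha> + w)\<close> passes
  through \<open>p + (\<alpha> \<times> w)/\<parallel>\<alpha>\<parallel>\<^sup>2\<close>, so the first axis is the line through \<open>p\<close> along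
  \<open>r\<^sub>1\<close> and the second passes through a point \<open>p + v\<close> with \<open>v \<perp> r\<^sub>1, \<alpha>\<^sub>2\<close>.
  In \<open>\<real>\<^sup>3\<close> the vectors orthogonal to two independent directions form a line, so every
  common normal is parallel to \<open>r\<^sub>3\<close>, and \<open>p\<close>, \<open>p + v\<close> are the feet of the unique
  common perpendicular of the two axes.
\<close>

lemma orthogonal_both_eq_multiple_cross:
  fixes a b w :: "real^3"
  assumes "cross3 a b \<noteq> 0" and "w \<bullet> a = 0" and "w \<bullet> b = 0"
  shows "w = ((cross3 a b \<bullet> w) / (cross3 a b \<bullet> cross3 a b)) *\<^sub>R cross3 a b"
proof -
  define c where "c = cross3 a b"
  have "cross3 c w = 0"
    using assms(2,3) by (simp add: c_def cross_skew[of _ w] Lagrange inner_commute)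
  then have "(c \<bullet> w) *\<^sub>R c - (c \<bullet> c) *\<^sub>R w = 0"
    using Lagrange[of c c w] by simp
  moreover have "c \<bullet> c \<noteq> 0" using assms(1) c_def by simp
  ultimately have "w = (1 / (c \<bullet> c)) *\<^sub>R ((c \<bullet> w) *\<^sub>R c)" by simp
  then show ?thesis unfolding c_def by simp
qed

lemma orthogonal_pair_parallel:
  fixes a b u v :: "real^3"
  assumes "cross3 a b \<noteq> 0"
    and "u \<noteq> 0" "u \<bullet> a = 0" "u \<bullet> b = 0"
    and "v \<noteq> 0" "v \<bullet> a = 0" "v \<bullet> b = 0"
  shows "parallel u v"
proof -
  define c where "c = cross3 a b"
  have u: "u = ((c \<bullet> u) / (c \<bullet> c)) *\<^sub>R c" and v: "v = ((c \<bullet> v) / (c \<bullet> c)) *\<^sub>R c"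
    using orthogonal_both_eq_multiple_cross assms unfolding c_def by blast+
  have "c \<bullet> v \<noteq> 0" using v \<open>v \<noteq> 0\<close> by (metis div_0 scale_zero_left)
  then have "u = ((c \<bullet> u) / (c \<bullet> v)) *\<^sub>R v"
    by (subst u, subst v) simp
  then show ?thesis unfolding parallel_def using assms(2,5) by blast
qed

lemma on_line_diff:
  assumes "on_line x L" and "on_line y L"
  obtains t where "y = x + t *\<^sub>R snd L"
proof -
  obtain s t where "x = fst L + s *\<^sub>R snd L" "y = fst L + t *\<^sub>R snd L"
    using assms unfolding on_line_def by blast
  then have "y = x + (t - s) *\<^sub>R snd L" by (simp add: algebra_simps)
  then show ?thesis by (rule that)
qed

lemma orthogonal_lines_meet_once:
  assumes "snd L \<bullet> snd M = 0"
    and "on_line x L" "on_line x M" "on_line y L" "on_line y M"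
  shows "x = y"
proof -
  obtain s where s: "y = x + s *\<^sub>R snd L" using on_line_diff assms(2,4) by blast
  obtain t where t: "y = x + t *\<^sub>R snd M" using on_line_diff assms(3,5) by blast
  have "s *\<^sub>R snd L = t *\<^sub>R snd M" using s t by simp
  then have "t * (snd M \<bullet> snd M) = 0"
    by (metis assms(1) inner_scaleR_left mult_zero_right)
  then have "t *\<^sub>R snd M = 0" by auto
  then show ?thesis using t by simp
qed

lemma common_normal_exists:
  assumes "cross3 (snd L1) (snd L2) \<noteq> 0"
    and "on_line p L1" "on_line q L2"
    and "(q - p) \<bullet> snd L1 = 0" "(q - p) \<bullet> snd L2 = 0"
  shows "is_common_normal L1 L2 (p, cross3 (snd L1) (snd L2))"
proof -
  define c where "c = cross3 (snd L1) (snd L2)"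
  have "q - p = ((c \<bullet> (q - p)) / (c \<bullet> c)) *\<^sub>R c"
    using orthogonal_both_eq_multiple_cross assms unfolding c_def by blast
  then have "on_line q (p, c)" unfolding on_line_def by (metis add.commute diff_add_cancel fst_conv snd_conv)
  moreover have "on_line p (p, c)" unfolding on_line_def by (auto intro: exI[of _ 0])
  ultimately show ?thesis
    using assms unfolding is_common_normal_def c_def by (auto simp: dot_cross_self inner_commute)
qed

lemma common_normal_meets_at_foot:
  assumes "cross3 (snd L1) (snd L2) \<noteq> 0"
    and "on_line p L1" "on_line q L2"
    and "(q - p) \<bullet> snd L1 = 0" "(q - p) \<bullet> snd L2 = 0"
    and N: "is_common_normal L1 L2 N"
  shows "{x. on_line x L1 \<and> on_line x N} = {p}"
proof -
  obtain x y where x: "on_line x L1" "on_line x N" and y: "on_line y L2" "on_line y N"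
    using N unfolding is_common_normal_def by blast
  obtain s where s: "x = p + s *\<^sub>R snd L1" using on_line_diff assms(2) x(1) by blast
  obtain t where t: "y = q + t *\<^sub>R snd L2" using on_line_diff assms(3) y(1) by blast
  obtain l where l: "y = x + l *\<^sub>R snd N" using on_line_diff x(2) y(2) by blast
  define m where "m = l *\<^sub>R snd N - (q - p)"
  have m: "m = t *\<^sub>R snd L2 - s *\<^sub>R snd L1"
    unfolding m_def using s t l by (simp add: algebra_simps)
  have "m \<bullet> snd L1 = 0" "m \<bullet> snd L2 = 0"
    using assms(4,5) N unfolding m_def is_common_normal_def by (simp_all add: inner_diff_left)
  \<comment> \<open>\<open>m\<close> is a combination of the two directions and orthogonal to both\<close>
  then have "m \<bullet> m = 0"
    by (simp add: m inner_diff_right inner_commute[of _ m])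
  then have "t *\<^sub>R snd L2 = s *\<^sub>R snd L1" using m by simp
  then have "s *\<^sub>R cross3 (snd L1) (snd L2) = 0"
    by (metis cross_mult_left cross_refl scaleR_zero_right)
  then have "x = p" using s assms(1) by simp
  then have p_on_N: "on_line p N" using x(2) by simp
  have "x' = p" if "on_line x' L1" "on_line x' N" for x'
    using orthogonal_lines_meet_once[of L1 N] N that assms(2) p_on_N
    unfolding is_common_normal_def by (metis inner_commute)
  then show ?thesis using assms(2) p_on_N by blast
qed

lemma on_line_screw_axis:
  fixes \<alpha> p w :: "real^3"
  assumes "\<alpha> \<noteq> 0"
  shows "on_line (p + (1 / (norm \<alpha>)\<^sup>2) *\<^sub>R cross3 \<alpha> w) (screw_axis \<alpha> (cross3 p \<alpha> + w))"
proof -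
  define n where "n = norm \<alpha>"
  define c where "c = cross3 \<alpha> w"
  have n: "n \<noteq> 0" using assms n_def by simp
  have cross_eq: "cross3 \<alpha> (cross3 p \<alpha> + w) = n\<^sup>2 *\<^sub>R p - (\<alpha> \<bullet> p) *\<^sub>R \<alpha> + c"
    by (simp add: n_def c_def cross_add_right Lagrange power2_norm_eq_inner)
  then have "p + (1 / n\<^sup>2) *\<^sub>R c
      = fst (screw_axis \<alpha> (cross3 p \<alpha> + w)) + ((\<alpha> \<bullet> p) / n) *\<^sub>R snd (screw_axis \<alpha> (cross3 p \<alpha> + w))"
    unfolding screw_axis_def fst_conv snd_conv n_def[symmetric] cross_eq
    using n by (simp add: algebra_simps power2_eq_square)
  then show ?thesis unfolding on_line_def n_def c_def by blast
qed

lemma column_matrix_mult: "column j (M ** N) = M *v column j N"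
  by (simp add: vec_eq_iff column_def matrix_matrix_mult_def matrix_vector_mult_def)

lemma skew_mult_vec: "skew a *v b = cross3 a b"
  by (simp add: skew_def cross3_simps matrix_vector_mult_def axis_def)

lemma column_mult_upper_triangular3:
  fixes M U :: "real^3^3"
  assumes "upper_triangular3 U"
  shows "column 1 (M ** U) = U$1$1 *\<^sub>R column 1 M"
    and "column 2 (M ** U) = U$1$2 *\<^sub>R column 1 M + U$2$2 *\<^sub>R column 2 M"
  using assms
  by (simp_all add: upper_triangular3_def vec_eq_iff column_def matrix_matrix_mult_def sum_3)

lemma orthogonal_matrix_column_inner:
  fixes R :: "real^'n^'n"
  assumes "orthogonal_matrix R"
  shows "column i R \<bullet> column i R = 1" and "i \<noteq> j \<Longrightarrow> column i R \<bullet> column j R = 0"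
  using assms unfolding orthogonal_matrix_orthonormal_columns orthogonal_def
  by (auto simp: norm_eq_1)

lemma SU_decomposition_columns:
  assumes "is_SU_decomposition A B R p U1 U2"
  shows "column 1 A = U1$1$1 *\<^sub>R column 1 R"
    and "column 2 A = U1$1$2 *\<^sub>R column 1 R + U1$2$2 *\<^sub>R column 2 R"
    and "column 1 B = cross3 p (column 1 A) + U2$1$1 *\<^sub>R column 1 R"
    and "column 2 B = cross3 p (column 2 A) + (U2$1$2 *\<^sub>R column 1 R + U2$2$2 *\<^sub>R column 2 R)"
proof -
  have A: "A = R ** U1" and U1: "upper_triangular3 U1" and U2: "upper_triangular3 U2"
    and B: "B = (skew p ** R) ** U1 + R ** U2"
    using assms unfolding is_SU_decomposition_def by auto
  have "column j ((skew p ** R) ** U1) = cross3 p (column j A)" for j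
    unfolding A column_matrix_mult matrix_vector_mul_assoc[symmetric] skew_mult_vec ..
  then have column_B: "column j B = cross3 p (column j A) + column j (R ** U2)" for j
    unfolding B by (simp add: column_def vec_eq_iff)
  show "column 1 A = U1$1$1 *\<^sub>R column 1 R"
    and "column 2 A = U1$1$2 *\<^sub>R column 1 R + U1$2$2 *\<^sub>R column 2 R"
    unfolding A using column_mult_upper_triangular3[OF U1] by simp_all
  show "column 1 B = cross3 p (column 1 A) + U2$1$1 *\<^sub>R column 1 R"
    and "column 2 B = cross3 p (column 2 A) + (U2$1$2 *\<^sub>R column 1 R + U2$2$2 *\<^sub>R column 2 R)"
    unfolding column_B using column_mult_upper_triangular3[OF U2] by simp_all
qed

lemma SU_decomposition_first_axis:
  assumes "is_SU_decomposition A B R p U1 U2"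
  shows "snd (screw_axis (column 1 A) (column 1 B)) = column 1 R"
    and "on_line p (screw_axis (column 1 A) (column 1 B))"
proof -
  have "U1$1$1 > 0" and "orthogonal_matrix R"
    using assms by (simp_all add: is_SU_decomposition_def rotation_matrix_def)
  then have "norm (column 1 A) = U1$1$1"
    using SU_decomposition_columns(1)[OF assms] orthogonal_matrix_column_inner(1)
    by (simp add: norm_eq_1)
  with \<open>U1$1$1 > 0\<close> show "snd (screw_axis (column 1 A) (column 1 B)) = column 1 R"
    by (simp add: screw_axis_def SU_decomposition_columns(1)[OF assms])
  have "column 1 A \<noteq> 0" using \<open>norm (column 1 A) = U1$1$1\<close> \<open>U1$1$1 > 0\<close> by auto
  moreover have "cross3 (column 1 A) (U2$1$1 *\<^sub>R column 1 R) = 0"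
    by (simp add: SU_decomposition_columns(1)[OF assms] cross_mult_left cross_mult_right)
  ultimately show "on_line p (screw_axis (column 1 A) (column 1 B))"
    using on_line_screw_axis[of "column 1 A" p "U2$1$1 *\<^sub>R column 1 R"]
    by (simp add: SU_decomposition_columns(3)[OF assms])
qed

lemma SU_decomposition_column_inner:
  assumes "is_SU_decomposition A B R p U1 U2"
  shows "column 2 R \<bullet> column 2 A = U1$2$2"
    and "column 3 R \<bullet> column 1 R = 0"
    and "column 3 R \<bullet> column 2 A = 0"
    and "column 3 R \<noteq> 0"
proof -
  have "orthogonal_matrix R" using assms by (simp add: is_SU_decomposition_def rotation_matrix_def)
  note inner = orthogonal_matrix_column_inner[OF this]
  show "column 2 R \<bullet> column 2 A = U1$2$2" and "column 3 R \<bullet> column 2 A = 0"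
    using inner(1)[of 2] inner(2)[of 2 1] inner(2)[of 3 1] inner(2)[of 3 2]
    by (simp_all add: SU_decomposition_columns(2)[OF assms] inner_add_right)
  show "column 3 R \<bullet> column 1 R = 0" using inner(2)[of 3 1] by simp
  show "column 3 R \<noteq> 0" using inner(1)[of 3] by auto
qed

lemma SU_decomposition_second_axis_foot:
  assumes "is_SU_decomposition A B R p U1 U2"
  obtains q where "on_line q (screw_axis (column 2 A) (column 2 B))"
    and "(q - p) \<bullet> column 1 R = 0" and "(q - p) \<bullet> column 2 A = 0"
proof -
  define w where "w = U2$1$2 *\<^sub>R column 1 R + U2$2$2 *\<^sub>R column 2 R"
  define q where "q = p + (1 / (norm (column 2 A))\<^sup>2) *\<^sub>R cross3 (column 2 A) w"
  have "U1$2$2 > 0" using assms by (simp add: is_SU_decomposition_def)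
  then have "column 2 A \<noteq> 0" using SU_decomposition_column_inner(1)[OF assms] by auto
  then have "on_line q (screw_axis (column 2 A) (column 2 B))"
    unfolding q_def w_def SU_decomposition_columns(4)[OF assms] by (rule on_line_screw_axis)
  moreover have "(q - p) \<bullet> column 1 R = 0"
    by (simp add: q_def w_def SU_decomposition_columns(2)[OF assms] cross_add_left cross_add_right
        cross_mult_left cross_mult_right inner_add_left inner_add_right dot_cross_self inner_commute[of _ "column 1 R"])
  moreover have "(q - p) \<bullet> column 2 A = 0"
    by (simp add: q_def dot_cross_self inner_commute[of _ "column 2 A"])
  ultimately show ?thesis by (rule that)
qed

theorem mainTheorem3:
  fixes A B R U1 U2 :: "real^3^3" and p :: "real^3"
  assumes "norm (column 1 A) \<noteq> 0"
    and "cross3 (column 1 A) (column 2 A) \<noteq> 0"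
    and "is_SU_decomposition A B R p U1 U2"
  shows "parallel (column 1 R) (snd (screw_axis (column 1 A) (column 1 B)))
    \<and> (\<exists>N. is_common_normal (screw_axis (column 1 A) (column 1 B))
                             (screw_axis (column 2 A) (column 2 B)) N)
    \<and> (\<forall>N. is_common_normal (screw_axis (column 1 A) (column 1 B))
                             (screw_axis (column 2 A) (column 2 B)) N
           \<longrightarrow> parallel (column 3 R) (snd N))
    \<and> on_line p (screw_axis (column 1 A) (column 1 B))
    \<and> (\<forall>N. is_common_normal (screw_axis (column 1 A) (column 1 B))
                             (screw_axis (column 2 A) (column 2 B)) N
           \<longrightarrow> {x. on_line x (screw_axis (column 1 A) (column 1 B)) \<and> on_line x N} = {p})"
proof -
  let ?L1 = "screw_axis (column 1 A) (column 1 B)" and ?L2 = "screw_axis (column 2 A) (column 2 B)"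
  note SU = assms(3)
  have d1: "snd ?L1 = column 1 R" and p_on_L1: "on_line p ?L1"
    using SU_decomposition_first_axis[OF SU] by simp_all
  have d2: "snd ?L2 = (1 / norm (column 2 A)) *\<^sub>R column 2 A" by (simp add: screw_axis_def)
  have cross: "cross3 (snd ?L1) (snd ?L2) \<noteq> 0"
    using assms(1,2) by (auto simp: screw_axis_def cross_mult_left cross_mult_right)
  obtain q where q_on_L2: "on_line q ?L2" and foot: "(q - p) \<bullet> snd ?L1 = 0" "(q - p) \<bullet> snd ?L2 = 0"
    using SU_decomposition_second_axis_foot[OF SU] d1 d2 by (metis inner_scaleR_right mult_zero_right)
  have r3: "column 3 R \<noteq> 0" "column 3 R \<bullet> snd ?L1 = 0" "column 3 R \<bullet> snd ?L2 = 0"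
    using SU_decomposition_column_inner[OF SU] d1 d2 by simp_all
  have "parallel (column 1 R) (snd ?L1)"
    using cross d1 unfolding parallel_def by (metis cross_zero_left scaleR_one)
  moreover have "parallel (column 3 R) (snd N)" if "is_common_normal ?L1 ?L2 N" for N
    using orthogonal_pair_parallel[OF cross r3] that unfolding is_common_normal_def by simp
  ultimately show ?thesis
    using p_on_L1 common_normal_exists[OF cross p_on_L1 q_on_L2 foot]
      common_normal_meets_at_foot[OF cross p_on_L1 q_on_L2 foot] by blast
qed

end
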